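(* For any $\nu\ge0$ and any $v_0\in V_h$, the projected ODE $\frac{dv}{dt}=-P_hQ(v,v)-\nu\Delta_hv$, $v(0)=v_0$, has a unique global solution $v\in C^1([0,\infty);V_h)$. It satisfies the energy equality $\frac{dE^{\rm kin}}{dt}=-\nu\|\tilde D_1v\|_{M_2}^2\le0$, where $E^{\rm kin}=\frac12\langle v,v\rangle_1$; consequently $E^{\rm kin}(t)\le E^{\rm kin}(0)$ and $\nu\int_0^T\|\tilde D_1v\|_{M_2}^2dt\le E^{\rm kin}(0)$ for all $T>0$.
   Context: On a fixed mesh, $C^k(\mathcal K^* )$ are the (finite-dimensional) dual $k$-cochain spaces; $\tilde D_1:C^1\to C^2$ is the dual coboundary matrix and $D_2$ the primal coboundary from faces to cells, with $D_2\tilde D_1^T=0$. $M_1,M_2$ are positive diagonal Hodge-star matrices, $\langle v,w\rangle_1=v^TM_1w$, $\|\omega\|_{M_2}^2=\omega^TM_2\omega$. $V_h=\ker(D_2M_1)$ and $P_h$ is the $M_1$-orthogonal projection onto $V_h$. $\Delta_h=M_1^{-1}\tilde D_1^TM_2\tilde D_1$. $v\mapsto\tilde U(v)$ is linear with values in matrices of the shape of $\tilde D_1^T$, and $Q$ is the bilinear map $M_1Q(v_1,v_2)=\frac12(\tilde U(v_1)\tilde D_1v_2-\tilde D_1^T\tilde U(v_1)^Tv_2)$. *)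

theory Defs
  imports "HOL-Analysis.Analysis"
begin

text \<open>Dual 1-cochains: real^'e; dual 2-cochains: real^'f; primal cells: real^'c.
  D1t : C^1 -> C^2 is a real^'e^'f matrix, D2 : faces -> cells is real^'e^'c.\<close>

definition pos_diag :: "real^'n^'n \<Rightarrow> bool" where
  "pos_diag M \<longleftrightarrow> (\<forall>i j. i \<noteq> j \<longrightarrow> M$i$j = 0) \<and> (\<forall>i. M$i$i > 0)"

definition inner_M :: "real^'n^'n \<Rightarrow> real^'n \<Rightarrow> real^'n \<Rightarrow> real" where
  "inner_M M v w = v \<bullet> (M *v w)"

definition normsq_M :: "real^'n^'n \<Rightarrow> real^'n \<Rightarrow> real" where
  "normsq_M M w = w \<bullet> (M *v w)"

definition Vh :: "real^'e^'c \<Rightarrow> real^'e^'e \<Rightarrow> (real^'e) set" where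
  "Vh D2 M1 = {v. (D2 ** M1) *v v = 0}"

definition Ph :: "real^'e^'c \<Rightarrow> real^'e^'e \<Rightarrow> real^'e \<Rightarrow> real^'e" where
  "Ph D2 M1 v = (THE w. w \<in> Vh D2 M1 \<and> (\<forall>u \<in> Vh D2 M1. inner_M M1 (v - w) u = 0))"

definition Deltah :: "real^'e^'e \<Rightarrow> real^'f^'f \<Rightarrow> real^'e^'f \<Rightarrow> real^'e^'e" where
  "Deltah M1 M2 D1t = matrix_inv M1 ** transpose D1t ** M2 ** D1t"

definition Qop :: "real^'e^'e \<Rightarrow> real^'e^'f \<Rightarrow> (real^'e \<Rightarrow> real^'f^'e)
    \<Rightarrow> real^'e \<Rightarrow> real^'e \<Rightarrow> real^'e" where
  "Qop M1 D1t U v1 v2 = matrix_inv M1 *v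
     ((1/2) *\<^sub>R (U v1 *v (D1t *v v2) - transpose D1t *v (transpose (U v1) *v v2)))"

definition Ekin :: "real^'e^'e \<Rightarrow> real^'e \<Rightarrow> real" where
  "Ekin M1 v = (1/2) * inner_M M1 v v"

definition is_solution ::
  "real^'e^'c \<Rightarrow> real^'e^'e \<Rightarrow> real^'f^'f \<Rightarrow> real^'e^'f \<Rightarrow> (real^'e \<Rightarrow> real^'f^'e)
   \<Rightarrow> real \<Rightarrow> real^'e \<Rightarrow> (real \<Rightarrow> real^'e) \<Rightarrow> bool" where
  "is_solution D2 M1 M2 D1t U \<nu> v0 v \<longleftrightarrow>
     v 0 = v0 \<and>
     (\<forall>t\<ge>0. v t \<in> Vh D2 M1) \<and>
     (\<exists>v'. continuous_on {0..} v' \<and>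
        (\<forall>t\<ge>0. (v has_vector_derivative v' t) (at t within {0..}))) \<and>
     (\<forall>t\<ge>0. (v has_vector_derivative
          (- Ph D2 M1 (Qop M1 D1t U (v t) (v t)) - \<nu> *\<^sub>R (Deltah M1 M2 D1t *v v t)))
        (at t within {0..}))"

end

theory Submission
  imports Defs
begin

text \<open>The right-hand side \<open>F v = - Ph (Q(v,v)) - \<nu> \<Delta>h v\<close> maps into \<open>Vh\<close>,
  is Lipschitz on bounded sets, and is dissipative on \<open>Vh\<close> for the energy
  \<open>\<langle>v, v\<rangle>\<^sub>1\<close>: \<open>Q(v,v)\<close> is \<open>M1\<close>-orthogonal to \<open>v\<close> by its skew
  construction, \<open>Ph\<close> is \<open>M1\<close>-self-adjoint, and
  \<open>\<langle>v, \<Delta>h v\<rangle>\<^sub>1 = \<parallel>D1t v\<parallel>\<^sup>2\<^sub>M\<^sub>2\<close>. So the energy cannot grow and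
  every solution stays in the ball determined by \<open>v0\<close>. Cutting \<open>F\<close> off radially
  outside that ball gives a globally Lipschitz field; its Picard solution exists for all times
  and never meets the cut-off, so it solves the original problem. Uniqueness is Gronwall's
  argument on the ball, and integrating the energy equality gives the dissipation bound.\<close>

section \<open>Diagonal inner products\<close>

lemma pos_diag_mult_vec:
  assumes "pos_diag (M::real^'n^'n)"
  shows "M *v x = (\<chi> i. M$i$i * x$i)"
proof -
  have "(\<Sum>j\<in>UNIV. M$i$j * x$j) = M$i$i * x$i" for i
    by (subst sum.remove[of _ i]) (use assms in \<open>auto simp: pos_diag_def intro!: sum.neutral\<close>)
  then show ?thesis by (simp add: vec_eq_iff matrix_vector_mult_def)
qed

lemma inner_M_pos_diag:
  assumes "pos_diag (M::real^'n^'n)"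
  shows "inner_M M x y = (\<Sum>i\<in>UNIV. M$i$i * x$i * y$i)"
  unfolding inner_M_def pos_diag_mult_vec[OF assms] inner_vec_def
  by (simp add: ac_simps)

lemma inner_M_commute:
  assumes "pos_diag (M::real^'n^'n)"
  shows "inner_M M x y = inner_M M y x"
  unfolding inner_M_pos_diag[OF assms] by (simp add: ac_simps)

lemma bounded_bilinear_inner_M: "bounded_bilinear (inner_M M)"
  unfolding inner_M_def
  by (rule bounded_bilinear.comp[OF bounded_bilinear_inner bounded_linear_ident]) simp

lemma inner_M_coercive:
  assumes "pos_diag (M::real^'n^'n)"
  obtains m where "m > 0" "\<And>x. m * (norm x)\<^sup>2 \<le> inner_M M x x"
proof
  let ?m = "Min (range (\<lambda>i. M$i$i))"
  show "?m > 0" using assms by (auto simp: pos_diag_def)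
  fix x :: "real^'n"
  have "?m * (norm x)\<^sup>2 = (\<Sum>i\<in>UNIV. ?m * x$i * x$i)"
    by (simp add: power2_norm_eq_inner inner_vec_def sum_distrib_left mult.assoc)
  also have "\<dots> \<le> (\<Sum>i\<in>UNIV. M$i$i * x$i * x$i)"
    by (intro sum_mono) (simp add: mult.assoc mult_right_mono)
  finally show "?m * (norm x)\<^sup>2 \<le> inner_M M x x"
    by (simp add: inner_M_pos_diag[OF assms])
qed

lemma inner_M_self_nonneg:
  assumes "pos_diag (M::real^'n^'n)"
  shows "0 \<le> inner_M M x x"
  unfolding inner_M_pos_diag[OF assms] using assms
  by (auto intro!: sum_nonneg simp: pos_diag_def mult.assoc less_imp_le)

lemma inner_M_self_eq_0_iff:
  assumes "pos_diag (M::real^'n^'n)"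
  shows "inner_M M x x = 0 \<longleftrightarrow> x = 0"
proof
  obtain m where "m > 0" "m * (norm x)\<^sup>2 \<le> inner_M M x x"
    using inner_M_coercive[OF assms] by blast
  moreover assume "inner_M M x x = 0"
  ultimately show "x = 0" by (simp add: mult_le_0_iff)
qed (simp add: inner_M_def)

lemma normsq_M_nonneg: "pos_diag M \<Longrightarrow> 0 \<le> normsq_M M x"
  using inner_M_self_nonneg by (simp add: normsq_M_def inner_M_def)

lemma pos_diag_mult_vec_inv:
  assumes "pos_diag (M::real^'n^'n)"
  shows "M *v (matrix_inv M *v y) = y"
proof -
  have "det M = (\<Prod>i\<in>UNIV. M$i$i)"
    by (rule det_diagonal) (use assms in \<open>auto simp: pos_diag_def\<close>)
  also have "\<dots> > 0" using assms by (intro prod_pos) (auto simp: pos_diag_def)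
  finally have "invertible M" by (simp add: invertible_det_nz)
  then have "M ** matrix_inv M = mat 1"
    unfolding invertible_def matrix_inv_def by (metis (mono_tags, lifting) someI_ex)
  then show ?thesis by (simp add: matrix_vector_mul_assoc)
qed

lemmas inner_M_diff_left = bounded_bilinear.diff_left[OF bounded_bilinear_inner_M]
lemmas inner_M_add_left = bounded_bilinear.add_left[OF bounded_bilinear_inner_M]
lemmas inner_M_scaleR_left = bounded_bilinear.scaleR_left[OF bounded_bilinear_inner_M]
lemmas inner_M_diff_right = bounded_bilinear.diff_right[OF bounded_bilinear_inner_M]
lemmas inner_M_minus_right = bounded_bilinear.minus_right[OF bounded_bilinear_inner_M]
lemmas inner_M_scaleR_right = bounded_bilinear.scaleR_right[OF bounded_bilinear_inner_M]

section \<open>The \<open>M1\<close>-orthogonal projection onto \<open>Vh\<close>\<close>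

lemma inner_M_orthogonal_projection_exists:
  assumes M: "pos_diag (M::real^'n^'n)" and S: "subspace S"
  shows "\<exists>w\<in>S. \<forall>u\<in>S. inner_M M (q - w) u = 0"
proof -
  define s where "s x = (\<chi> i. sqrt (M$i$i) * x$i)" for x :: "real^'n"
  have s: "linear s" unfolding s_def by (rule linearI) (auto simp: vec_eq_iff algebra_simps)
  have inner_M_s: "inner_M M x y = s x \<bullet> s y" for x y
  proof -
    have "M$i$i \<ge> 0" for i using M by (auto simp: pos_diag_def less_imp_le)
    then show ?thesis
      by (simp add: inner_M_pos_diag[OF M] s_def inner_vec_def algebra_simps)
  qed
  obtain y z where y: "y \<in> span (s ` S)" and z: "\<And>w. w \<in> span (s ` S) \<Longrightarrow> orthogonal z w"
    and "s q = y + z"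
    using orthogonal_subspace_decomp_exists by metis
  have span_sS: "span (s ` S) = s ` S"
    using S s by (metis span_linear_image span_eq_iff)
  then obtain w where "w \<in> S" "y = s w" using y by (metis imageE)
  moreover have "inner_M M (q - w) u = 0" if "u \<in> S" for u
    using \<open>s q = y + z\<close> \<open>y = s w\<close> z[of "s u"] span_sS that
    by (simp add: inner_M_s linear_diff[OF s] orthogonal_def)
  ultimately show ?thesis by blast
qed

lemma inner_M_orthogonal_projection_unique:
  assumes M: "pos_diag (M::real^'n^'n)" and S: "subspace S"
    and "w1 \<in> S" "\<forall>u\<in>S. inner_M M (q - w1) u = 0"
    and "w2 \<in> S" "\<forall>u\<in>S. inner_M M (q - w2) u = 0"
  shows "w1 = w2"
proof -
  have "w1 - w2 \<in> S" using S assms by (simp add: subspace_diff)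
  then have "inner_M M ((q - w2) - (q - w1)) (w1 - w2) = 0"
    using assms by (simp add: inner_M_diff_left)
  then show ?thesis using inner_M_self_eq_0_iff[OF M] by simp
qed

lemma subspace_Vh: "subspace (Vh D2 M1)"
  unfolding subspace_def Vh_def
  by (simp add: matrix_vector_right_distrib matrix_scaleR_vector_ac
      flip: scaleR_matrix_vector_assoc)

lemma Ph_eqI:
  assumes "pos_diag M1" "w \<in> Vh D2 M1" "\<forall>u\<in>Vh D2 M1. inner_M M1 (q - w) u = 0"
  shows "Ph D2 M1 q = w"
  unfolding Ph_def
  using assms inner_M_orthogonal_projection_unique[OF assms(1) subspace_Vh]
  by (intro the_equality) auto

lemma Ph_in_Vh_orthogonal:
  assumes "pos_diag M1"
  shows "Ph D2 M1 q \<in> Vh D2 M1 \<and> (\<forall>u\<in>Vh D2 M1. inner_M M1 (q - Ph D2 M1 q) u = 0)"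
  using inner_M_orthogonal_projection_exists[OF assms subspace_Vh] Ph_eqI[OF assms] by metis

lemma linear_Ph:
  assumes M: "pos_diag M1"
  shows "linear (Ph D2 M1)"
proof (rule linearI)
  note P = Ph_in_Vh_orthogonal[OF M, of D2]
  show "Ph D2 M1 (x + y) = Ph D2 M1 x + Ph D2 M1 y" for x y
  proof (rule Ph_eqI[OF M])
    have "x + y - (Ph D2 M1 x + Ph D2 M1 y) = (x - Ph D2 M1 x) + (y - Ph D2 M1 y)"
      by simp
    then show "\<forall>u\<in>Vh D2 M1. inner_M M1 (x + y - (Ph D2 M1 x + Ph D2 M1 y)) u = 0"
      using P[of x] P[of y] by (simp only: inner_M_add_left) simp
  qed (use P subspace_add[OF subspace_Vh] in blast)
  show "Ph D2 M1 (r *\<^sub>R x) = r *\<^sub>R Ph D2 M1 x" for r x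
    using P[of x] subspace_scale[OF subspace_Vh]
    by (intro Ph_eqI[OF M]) (auto simp: inner_M_scaleR_left simp flip: scaleR_diff_right)
qed

lemma inner_M_Ph_right:
  assumes M: "pos_diag M1" and "u \<in> Vh D2 M1"
  shows "inner_M M1 u (Ph D2 M1 q) = inner_M M1 u q"
  using Ph_in_Vh_orthogonal[OF M, of D2 q] assms
  by (simp add: inner_M_commute[OF M, of u] inner_M_diff_left)

section \<open>The projected vector field\<close>

lemma lipschitz_on_cball_bilinear_diag:
  assumes "bounded_bilinear Q"
  obtains L where "L-lipschitz_on (cball 0 R) (\<lambda>x. Q x x)"
proof -
  interpret Q: bounded_bilinear Q by fact
  obtain K where K: "K > 0" "\<And>a b. norm (Q a b) \<le> norm a * norm b * K"
    using Q.pos_bounded by blast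
  have "dist (Q x x) (Q y y) \<le> (2 * max R 0 * K) * dist x y"
    if "x \<in> cball 0 R" "y \<in> cball 0 R" for x y
  proof -
    have "Q x x - Q y y = Q x (x - y) + Q (x - y) y"
      by (simp add: Q.diff_right Q.diff_left)
    then have "norm (Q x x - Q y y) \<le> norm (Q x (x - y)) + norm (Q (x - y) y)"
      by (simp add: norm_triangle_ineq)
    also have "\<dots> \<le> norm x * norm (x - y) * K + norm (x - y) * norm y * K"
      by (intro add_mono K(2))
    also have "\<dots> \<le> max R 0 * norm (x - y) * K + norm (x - y) * max R 0 * K"
      using that K(1) by (intro add_mono mult_right_mono mult_left_mono) auto
    finally show ?thesis by (simp add: dist_norm algebra_simps)
  qed
  then have "(2 * max R 0 * K)-lipschitz_on (cball 0 R) (\<lambda>x. Q x x)"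
    using K(1) by (intro lipschitz_onI) auto
  then show ?thesis ..
qed

definition projected_field ::
  "real^'e^'c \<Rightarrow> real^'e^'e \<Rightarrow> real^'f^'f \<Rightarrow> real^'e^'f \<Rightarrow> (real^'e \<Rightarrow> real^'f^'e)
   \<Rightarrow> real \<Rightarrow> real^'e \<Rightarrow> real^'e" where
  "projected_field D2 M1 M2 D1t U \<nu> v =
     - Ph D2 M1 (Qop M1 D1t U v v) - \<nu> *\<^sub>R (Deltah M1 M2 D1t *v v)"

lemma Deltah_mult_vec:
  "Deltah M1 M2 D1t *v v = matrix_inv M1 *v (transpose D1t *v (M2 *v (D1t *v v)))"
  by (simp add: Deltah_def matrix_vector_mul_assoc matrix_mul_assoc)

lemma Deltah_in_Vh:
  assumes D: "D2 ** transpose D1t = 0" and M: "pos_diag M1"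
  shows "Deltah M1 M2 D1t *v v \<in> Vh D2 M1"
proof -
  have "(D2 ** M1) *v (Deltah M1 M2 D1t *v v) = D2 *v (M1 *v (Deltah M1 M2 D1t *v v))"
    by (simp add: matrix_vector_mul_assoc matrix_mul_assoc)
  also have "\<dots> = (D2 ** transpose D1t) *v (M2 *v (D1t *v v))"
    unfolding Deltah_mult_vec pos_diag_mult_vec_inv[OF M] by (rule matrix_vector_mul_assoc)
  finally show ?thesis by (simp add: Vh_def D)
qed

lemma projected_field_in_Vh:
  assumes "D2 ** transpose D1t = 0" and M: "pos_diag M1"
  shows "projected_field D2 M1 M2 D1t U \<nu> v \<in> Vh D2 M1"
  unfolding projected_field_def
  using Ph_in_Vh_orthogonal[OF M] Deltah_in_Vh[OF assms] subspace_Vh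
  by (metis subspace_diff subspace_neg subspace_scale)

text \<open>The advection term is energy-neutral: the two halves of \<open>u\<^sup>T M1 Q(u,u)\<close> are
  the same scalar \<open>u\<^sup>T U(u) D1t u\<close>, once directly and once transposed.\<close>
lemma inner_M_Qop_self:
  assumes M: "pos_diag M1"
  shows "inner_M M1 u (Qop M1 D1t U u u) = 0"
proof -
  have "u \<bullet> (transpose D1t *v (transpose (U u) *v u)) = u \<bullet> (U u *v (D1t *v u))"
    by (metis dot_lmul_matrix inner_commute transpose_matrix_vector)
  then show ?thesis
    by (simp add: inner_M_def Qop_def pos_diag_mult_vec_inv[OF M] inner_diff_right)
qed

lemma inner_M_Deltah:
  assumes M: "pos_diag M1"
  shows "inner_M M1 u (Deltah M1 M2 D1t *v u) = normsq_M M2 (D1t *v u)"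
  unfolding inner_M_def normsq_M_def Deltah_mult_vec pos_diag_mult_vec_inv[OF M]
  by (metis dot_lmul_matrix inner_commute transpose_matrix_vector)

lemma inner_M_projected_field:
  assumes M: "pos_diag M1" and u: "u \<in> Vh D2 M1"
  shows "inner_M M1 u (projected_field D2 M1 M2 D1t U \<nu> u) = - \<nu> * normsq_M M2 (D1t *v u)"
  by (simp add: projected_field_def inner_M_diff_right inner_M_minus_right inner_M_scaleR_right
      inner_M_Ph_right[OF M u] inner_M_Qop_self[OF M] inner_M_Deltah[OF M])

lemma bounded_bilinear_Qop:
  assumes U: "linear U"
  shows "bounded_bilinear (Qop M1 D1t U)"
proof -
  have "bilinear (Qop M1 D1t U)"
    unfolding bilinear_def Qop_def
    by (auto intro!: linearI simp: vec_eq_iff matrix_vector_mult_def transpose_def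
        linear_add[OF U] linear_scale[OF U] sum.distrib sum_distrib_left sum_subtractf add_divide_distrib
        algebra_simps)
  then show ?thesis by (simp add: bilinear_conv_bounded_bilinear)
qed

lemma projected_field_lipschitz_on_cball:
  assumes M: "pos_diag M1" and U: "linear U"
  obtains L where "L-lipschitz_on (cball 0 R) (projected_field D2 M1 M2 D1t U \<nu>)"
proof -
  obtain K where K: "K-lipschitz_on (cball 0 R) (\<lambda>x. Qop M1 D1t U x x)"
    using lipschitz_on_cball_bilinear_diag[OF bounded_bilinear_Qop[OF U]] .
  have "bounded_linear (Ph D2 M1)"
    using linear_Ph[OF M] by (simp add: linear_conv_bounded_linear)
  then obtain P where "P-lipschitz_on ((\<lambda>x. Qop M1 D1t U x x) ` cball 0 R) (Ph D2 M1)"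
    using bounded_linear.lipschitz_boundE by blast
  moreover have "bounded_linear (\<lambda>x. \<nu> *\<^sub>R (Deltah M1 M2 D1t *v x))"
    by (intro bounded_linear_compose[OF bounded_linear_scaleR_right])
      (simp add: linear_conv_bounded_linear)
  then obtain D where "D-lipschitz_on (cball 0 R) (\<lambda>x. \<nu> *\<^sub>R (Deltah M1 M2 D1t *v x))"
    using bounded_linear.lipschitz_boundE by blast
  ultimately have "(P * K + D)-lipschitz_on (cball 0 R)
      (\<lambda>x. - Ph D2 M1 (Qop M1 D1t U x x) - \<nu> *\<^sub>R (Deltah M1 M2 D1t *v x))"
    by (intro lipschitz_on_diff lipschitz_on_minus lipschitz_on_compose2[OF K])
  then show ?thesis
    by (intro that) (simp add: projected_field_def[abs_def])
qed

section \<open>Lipschitz ODEs\<close>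

lemma has_real_derivative_nonpos_imp_le:
  fixes f :: "real \<Rightarrow> real"
  assumes "a \<le> b"
    and f': "\<And>t. t \<in> {a..b} \<Longrightarrow> (f has_real_derivative f' t) (at t within {a..b})"
    and "\<And>t. t \<in> {a..b} \<Longrightarrow> f' t \<le> 0"
  shows "f b \<le> f a"
proof (rule DERIV_nonpos_imp_decreasing_open[OF \<open>a \<le> b\<close>])
  fix t assume "a < t" "t < b"
  then have "(f has_real_derivative f' t) (at t)"
    using f'[of t] at_within_Icc_at[of a t b] by simp
  then show "\<exists>y. (f has_real_derivative y) (at t) \<and> y \<le> 0"
    using assms(3) \<open>a < t\<close> \<open>t < b\<close> by auto
next
  show "continuous_on {a..b} f"
    using f' by (meson DERIV_continuous continuous_on_eq_continuous_within)
qed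

lemma has_integral_power_Icc:
  fixes c :: real
  assumes "0 \<le> c"
  shows "((\<lambda>s. s ^ n) has_integral c ^ Suc n / Suc n) {0..c}"
proof -
  have "((\<lambda>s. s ^ Suc n / Suc n) has_real_derivative s ^ n) (at s)" for s :: real
    using DERIV_cdivide[OF DERIV_pow[of "Suc n" s], of "Suc n"] by simp
  then have "((\<lambda>s. s ^ Suc n / Suc n) has_real_derivative s ^ n) (at s within {0..c})" for s
    by (simp add: has_field_derivative_at_within del: of_nat_Suc)
  then have "((\<lambda>s. s ^ n) has_integral c ^ Suc n / Suc n - 0 ^ Suc n / Suc n) {0..c}"
    using assms unfolding has_real_derivative_iff_has_vector_derivative
    by (intro fundamental_theorem_of_calculus) auto
  then show ?thesis by simp
qed

lemma clamp_real_in_Icc: "0 \<le> b \<Longrightarrow> clamp 0 b (t::real) \<in> {0..b}"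
  using clamp_in_interval[of 0 b t] by simp

text \<open>The Picard operator of \<open>x' = G x, x 0 = x0\<close> on \<open>[0, b]\<close>; composing with \<open>clamp\<close>
  extends its values constantly beyond \<open>[0, b]\<close>, so that it acts on the complete space of
  bounded continuous functions on the whole real line.\<close>
definition picard_step ::
  "('a::banach \<Rightarrow> 'a) \<Rightarrow> 'a \<Rightarrow> real \<Rightarrow> (real \<Rightarrow>\<^sub>C 'a) \<Rightarrow> real \<Rightarrow>\<^sub>C 'a"
  where "picard_step G x0 b f = Bcontfun (\<lambda>t. x0 + integral {0..clamp 0 b t} (\<lambda>s. G (f s)))"

lemma apply_picard_step:
  assumes G: "continuous_on UNIV G" and b: "0 \<le> b"
  shows "picard_step G x0 b f t = x0 + integral {0..clamp 0 b t} (\<lambda>s. G (f s))"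
proof -
  let ?I = "\<lambda>t. x0 + integral {0..t} (\<lambda>s. G (f s))"
  have "continuous_on UNIV (\<lambda>s. G (f s))"
    by (rule continuous_on_compose2[OF G continuous_on_apply_bcontfun]) auto
  then have "continuous_on {0..b} ?I"
    by (intro continuous_intros indefinite_integral_continuous_1 integrable_continuous_real)
      (auto intro: continuous_on_subset)
  then have I: "continuous_on (cbox 0 b) ?I" by simp
  have "bounded (?I ` cbox 0 b)"
    by (intro compact_imp_bounded compact_continuous_image I) simp
  then have "(\<lambda>t. ?I (clamp 0 b t)) \<in> bcontfun"
    unfolding bcontfun_def using clamp_continuous_on[OF I] clamp_bounded by blast
  then show ?thesis
    unfolding picard_step_def by (simp add: Bcontfun_inverse)
qed

lemma picard_step_iterate_dist:
  fixes G :: "'a::banach \<Rightarrow> 'a"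
  assumes G: "L-lipschitz_on UNIV G" and b: "0 \<le> b"
  shows "dist ((picard_step G x0 b ^^ n) f) ((picard_step G x0 b ^^ n) g)
    \<le> (L * b) ^ n / fact n * dist f g"
proof -
  let ?\<Phi> = "picard_step G x0 b"
  have L: "0 \<le> L" using lipschitz_on_nonneg[OF G] .
  have G_cont: "continuous_on UNIV G" using lipschitz_on_continuous_on[OF G] .
  have pointwise: "norm ((?\<Phi> ^^ n) f t - (?\<Phi> ^^ n) g t) \<le> (L * clamp 0 b t) ^ n / fact n * dist f g"
    for t
  proof (induction n arbitrary: t)
    case 0
    then show ?case using dist_bounded[of f t g] by (simp add: dist_norm)
  next
    case (Suc n)
    define c where "c = clamp 0 b t"
    have c: "c \<in> {0..b}" unfolding c_def using clamp_real_in_Icc[OF b] .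
    let ?F = "\<lambda>s. G ((?\<Phi> ^^ n) f s)" and ?G = "\<lambda>s. G ((?\<Phi> ^^ n) g s)"
    let ?K = "L ^ Suc n / fact n * dist f g"
    have integrable: "?F integrable_on {0..c}" "?G integrable_on {0..c}"
      by (auto intro!: integrable_continuous_real continuous_on_compose2[OF G_cont])
    have bound: "norm (?F s - ?G s) \<le> ?K * s ^ n" if "s \<in> {0..c}" for s
    proof -
      have "norm (?F s - ?G s) \<le> L * norm ((?\<Phi> ^^ n) f s - (?\<Phi> ^^ n) g s)"
        using lipschitz_on_normD[OF G] by simp
      also have "\<dots> \<le> L * ((L * s) ^ n / fact n * dist f g)"
        using Suc.IH[of s] that c L by (intro mult_left_mono) auto
      finally show ?thesis by (simp add: power_mult_distrib field_simps)
    qed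
    have majorant: "((\<lambda>s. ?K * s ^ n) has_integral ?K * (c ^ Suc n / Suc n)) {0..c}"
      using has_integral_power_Icc[of c n] c by (intro has_integral_mult_right) auto
    have "norm ((?\<Phi> ^^ Suc n) f t - (?\<Phi> ^^ Suc n) g t) = norm (integral {0..c} (\<lambda>s. ?F s - ?G s))"
      using integrable by (simp add: apply_picard_step[OF G_cont b] c_def integral_diff)
    also have "\<dots> \<le> integral {0..c} (\<lambda>s. ?K * s ^ n)"
      by (rule integral_norm_bound_integral[OF integrable_diff[OF integrable]
            has_integral_integrable[OF majorant] bound])
    also have "\<dots> = (L * c) ^ Suc n / fact (Suc n) * dist f g"
      unfolding integral_unique[OF majorant] by (simp add: power_mult_distrib field_simps)
    finally show ?case unfolding c_def .
  qed
  show ?thesis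
  proof (rule dist_bound)
    fix t
    have "(L * clamp 0 b t) ^ n / fact n * dist f g \<le> (L * b) ^ n / fact n * dist f g"
      using clamp_real_in_Icc[OF b, of t] L
      by (intro mult_right_mono divide_right_mono power_mono mult_left_mono) auto
    then show "dist ((?\<Phi> ^^ n) f t) ((?\<Phi> ^^ n) g t) \<le> (L * b) ^ n / fact n * dist f g"
      using pointwise[of t] unfolding dist_norm by linarith
  qed
qed

lemma lipschitz_ode_solution_exists_Icc:
  fixes G :: "'a::banach \<Rightarrow> 'a"
  assumes G: "L-lipschitz_on UNIV G" and b: "0 \<le> b"
  obtains x where "x 0 = x0"
    and "\<And>t. t \<in> {0..b} \<Longrightarrow> (x has_vector_derivative G (x t)) (at t within {0..b})"
proof -
  let ?\<Phi> = "picard_step G x0 b"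
  have G_cont: "continuous_on UNIV G" using lipschitz_on_continuous_on[OF G] .
  have "(\<lambda>n. (L * b) ^ n /\<^sub>R fact n) \<longlonglongrightarrow> 0"
    by (rule summable_LIMSEQ_zero[OF summable_exp_generic])
  then have "\<forall>\<^sub>F n in sequentially. (L * b) ^ n /\<^sub>R fact n < 1"
    by (rule order_tendstoD(2)) simp
  then obtain N where N: "(L * b) ^ N / fact N < 1"
    by (auto simp: eventually_sequentially divide_inverse_commute)
  have "\<exists>!f. (?\<Phi> ^^ N) f = f"
    using N picard_step_iterate_dist[OF G b] lipschitz_on_nonneg[OF G] b
    by (intro banach_fix_type[of "(L * b) ^ N / fact N"]) auto
  then obtain f where fixed: "(?\<Phi> ^^ N) f = f" and unique: "\<And>g. (?\<Phi> ^^ N) g = g \<Longrightarrow> g = f"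
    by blast
  (* \<Phi> f is a fixed point of \<Phi>^N as well, hence equal to f *)
  have "(?\<Phi> ^^ N) (?\<Phi> f) = ?\<Phi> ((?\<Phi> ^^ N) f)"
    by (rule funpow_swap1[symmetric])
  then have "?\<Phi> f = f" using fixed by (intro unique) simp
  then have f: "f t = x0 + integral {0..clamp 0 b t} (\<lambda>s. G (f s))" for t
    using apply_picard_step[OF G_cont b, of x0 f t] by simp
  show ?thesis
  proof
    show "f 0 = x0" using f[of 0] b by simp
    fix t assume t: "t \<in> {0..b}"
    have "continuous_on {0..b} (\<lambda>s. G (f s))"
      by (rule continuous_on_compose2[OF G_cont continuous_on_apply_bcontfun]) auto
    then have deriv: "((\<lambda>u. x0 + integral {0..u} (\<lambda>s. G (f s))) has_vector_derivative G (f t))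
        (at t within {0..b})"
      using has_vector_derivative_add[OF has_vector_derivative_const
          integral_has_vector_derivative[OF _ t]] by simp
    show "(f has_vector_derivative G (f t)) (at t within {0..b})"
      by (rule has_vector_derivative_transform[OF t _ deriv]) (subst f, simp)
  qed
qed

lemma has_real_derivative_bilinear_diag:
  fixes B :: "'a::real_normed_vector \<Rightarrow> 'a \<Rightarrow> real"
  assumes B: "bounded_bilinear B" "\<And>x y. B x y = B y x"
    and "(x has_vector_derivative x') (at t within S)"
  shows "((\<lambda>s. B (x s) (x s)) has_real_derivative 2 * B (x t) x') (at t within S)"
  using bounded_bilinear.has_vector_derivative[OF B(1) assms(3) assms(3)] B(2)[of x' "x t"]
  by (simp add: has_real_derivative_iff_has_vector_derivative)

lemma lipschitz_ode_solution_unique: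
  fixes G :: "'a::real_inner \<Rightarrow> 'a"
  assumes G: "L-lipschitz_on S G" and "0 \<le> b"
    and x: "\<And>t. t \<in> {0..b} \<Longrightarrow> x t \<in> S"
      "\<And>t. t \<in> {0..b} \<Longrightarrow> (x has_vector_derivative G (x t)) (at t within {0..b})"
    and y: "\<And>t. t \<in> {0..b} \<Longrightarrow> y t \<in> S"
      "\<And>t. t \<in> {0..b} \<Longrightarrow> (y has_vector_derivative G (y t)) (at t within {0..b})"
    and "x 0 = y 0"
  shows "x b = y b"
proof -
  text \<open>Gronwall: \<open>exp (-2 L t) * \<parallel>x t - y t\<parallel>\<^sup>2\<close> is non-increasing and vanishes at \<open>0\<close>.\<close>
  define d where "d = (\<lambda>s. (x s - y s) \<bullet> (x s - y s))"
  define d' where "d' s = 2 * ((x s - y s) \<bullet> (G (x s) - G (y s)))" for s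
  have d': "d' s \<le> 2 * L * d s" if "s \<in> {0..b}" for s
  proof -
    have "(x s - y s) \<bullet> (G (x s) - G (y s)) \<le> norm (x s - y s) * norm (G (x s) - G (y s))"
      by (rule norm_cauchy_schwarz)
    also have "\<dots> \<le> norm (x s - y s) * (L * norm (x s - y s))"
      using lipschitz_on_normD[OF G] x(1) y(1) that by (simp add: mult_left_mono)
    finally show ?thesis by (simp add: d_def d'_def dot_square_norm power2_eq_square mult_ac)
  qed
  have "exp (- (2 * L) * b) * d b \<le> exp (- (2 * L) * 0) * d 0"
  proof (rule has_real_derivative_nonpos_imp_le[OF \<open>0 \<le> b\<close>])
    fix s assume s: "s \<in> {0..b}"
    have "(d has_real_derivative d' s) (at s within {0..b})"
      using has_real_derivative_bilinear_diag[OF bounded_bilinear_inner inner_commute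
          has_vector_derivative_diff[OF x(2)[OF s] y(2)[OF s]]]
      by (simp add: d_def d'_def)
    then show "((\<lambda>s. exp (- (2 * L) * s) * d s) has_real_derivative
        exp (- (2 * L) * s) * (d' s - 2 * L * d s)) (at s within {0..b})"
      by (auto intro!: derivative_eq_intros simp: algebra_simps)
    show "exp (- (2 * L) * s) * (d' s - 2 * L * d s) \<le> 0"
      using d'[OF s] by (simp add: mult_nonneg_nonpos)
  qed
  then have "d b \<le> 0" using \<open>x 0 = y 0\<close> by (simp add: d_def mult_le_0_iff)
  then have "x b - y b = 0" using inner_gt_zero_iff[of "x b - y b"] unfolding d_def by linarith
  then show ?thesis by simp
qed

lemma lipschitz_ode_solution_exists:
  fixes G :: "'a::{banach, real_inner} \<Rightarrow> 'a"
  assumes G: "L-lipschitz_on UNIV G"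
  obtains x where "x 0 = x0" "\<And>t. 0 \<le> t \<Longrightarrow> (x has_vector_derivative G (x t)) (at t within {0..})"
proof -
  have "\<forall>b. \<exists>x. 0 \<le> b \<longrightarrow> x 0 = x0 \<and>
      (\<forall>t\<in>{0..b}. (x has_vector_derivative G (x t)) (at t within {0..b}))"
  proof (intro allI impI)
    fix b :: real
    show "\<exists>x. 0 \<le> b \<longrightarrow> x 0 = x0 \<and>
      (\<forall>t\<in>{0..b}. (x has_vector_derivative G (x t)) (at t within {0..b}))"
    proof (cases "0 \<le> b")
      case True
      then obtain x where "x 0 = x0"
        "\<And>t. t \<in> {0..b} \<Longrightarrow> (x has_vector_derivative G (x t)) (at t within {0..b})"
        using lipschitz_ode_solution_exists_Icc[OF G] by blast
      then show ?thesis by blast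
    qed simp
  qed
  from choice[OF this] obtain X where X: "\<forall>b. 0 \<le> b \<longrightarrow> X b 0 = x0 \<and>
      (\<forall>t\<in>{0..b}. (X b has_vector_derivative G (X b t)) (at t within {0..b}))"
    by blast
  then have X0: "\<And>b. 0 \<le> b \<Longrightarrow> X b 0 = x0"
    and X': "\<And>b t. 0 \<le> b \<Longrightarrow> t \<in> {0..b} \<Longrightarrow>
      (X b has_vector_derivative G (X b t)) (at t within {0..b})"
    by auto
  have agree: "X b u = X b' u" if "u \<in> {0..b}" "u \<in> {0..b'}" for b b' u
  proof (rule lipschitz_ode_solution_unique[OF G])
    fix t assume t: "t \<in> {0..u}"
    show "(X b has_vector_derivative G (X b t)) (at t within {0..u})"
      using that t by (intro has_vector_derivative_within_subset[OF X'[of b t]]) auto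
    show "(X b' has_vector_derivative G (X b' t)) (at t within {0..u})"
      using that t by (intro has_vector_derivative_within_subset[OF X'[of b' t]]) auto
  next
    show "0 \<le> u" "X b 0 = X b' 0" using that X0[of b] X0[of b'] by auto
  qed auto
  define x where "x t = X (t + 1) t" for t
  show ?thesis
  proof
    show "x 0 = x0" by (simp add: x_def X0)
    fix t :: real assume "0 \<le> t"
    then have "(X (t + 1) has_vector_derivative G (x t)) (at t within {0..t + 1})"
      using X' by (simp add: x_def)
    moreover have "x u = X (t + 1) u" if "u \<in> {0..t + 1}" for u
      using agree[of u "u + 1" "t + 1"] that by (simp add: x_def)
    ultimately have "(x has_vector_derivative G (x t)) (at t within {0..t + 1})"
      using \<open>0 \<le> t\<close> by (intro has_vector_derivative_transform[of t "{0..t + 1}" x "X (t + 1)"]) simp_all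
    moreover have "at t within {0..} = at t within {0..t + 1}"
      by (rule at_within_nhd[of _ "{..<t + 1}"]) auto
    ultimately show "(x has_vector_derivative G (x t)) (at t within {0..})" by simp
  qed
qed

section \<open>Dissipative ODEs\<close>

lemma bilinear_diag_le_initial_if_dissipative:
  fixes B :: "'a::real_normed_vector \<Rightarrow> 'a \<Rightarrow> real"
  assumes B: "bounded_bilinear B" "\<And>x y. B x y = B y x"
    and x': "\<And>t. 0 \<le> t \<Longrightarrow> (x has_vector_derivative x' t) (at t within {0..})"
    and "\<And>t. 0 \<le> t \<Longrightarrow> B (x t) (x' t) \<le> 0" and "0 \<le> t"
  shows "B (x t) (x t) \<le> B (x 0) (x 0)"
proof (rule has_real_derivative_nonpos_imp_le[where f = "\<lambda>s. B (x s) (x s)", OF \<open>0 \<le> t\<close>])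
  fix s assume "s \<in> {0..t}"
  then have "(x has_vector_derivative x' s) (at s within {0..t})"
    using x'[of s] by (auto intro: has_vector_derivative_within_subset)
  then show "((\<lambda>s. B (x s) (x s)) has_real_derivative 2 * B (x s) (x' s)) (at s within {0..t})"
    by (rule has_real_derivative_bilinear_diag[OF B])
  show "2 * B (x s) (x' s) \<le> 0" using assms(4) \<open>s \<in> {0..t}\<close> by simp
qed

lemma bounded_linear_image_const_if_derivative_in_kernel:
  assumes A: "bounded_linear A"
    and x': "\<And>t. 0 \<le> t \<Longrightarrow> (x has_vector_derivative x' t) (at t within {0..})"
    and "\<And>t. 0 \<le> t \<Longrightarrow> A (x' t) = 0" and "0 \<le> t"
  shows "A (x t) = A (x 0)"
proof -
  have "((\<lambda>s. A (x s)) has_derivative (\<lambda>h. 0)) (at s within {0..})" if "s \<in> {0..}" for s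
    using bounded_linear.has_vector_derivative[OF A x'] assms(3) that
    by (simp add: has_vector_derivative_def)
  then have "\<exists>c. \<forall>s\<in>{0..}. A (x s) = c"
    by (rule has_derivative_zero_constant[OF convex_real_interval(1)])
  then obtain c where "\<forall>s\<in>{0..}. A (x s) = c" ..
  then show ?thesis using \<open>0 \<le> t\<close> by simp
qed

lemma closest_point_cball_eq_scaleR:
  fixes x :: "'a::euclidean_space"
  assumes "0 < R"
  obtains c where "0 < c" "closest_point (cball 0 R) x = c *\<^sub>R x"
proof (cases "norm x \<le> R")
  case True
  then show ?thesis using that[of 1] by (simp add: closest_point_self)
next
  case False
  let ?c = "R / norm x"
  have "R < norm x" using False by simp
  moreover have "0 < norm x" using False assms by linarith
  ultimately have c: "0 < ?c" "?c < 1" using assms by (simp_all add: divide_less_eq)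
  have "?c *\<^sub>R x = closest_point (cball 0 R) x"
  proof (rule closest_point_unique)
    show "?c *\<^sub>R x \<in> cball 0 R" using False assms by simp
    have "dist x (?c *\<^sub>R x) = norm ((1 - ?c) *\<^sub>R x)"
      by (simp add: dist_norm scaleR_diff_left)
    also have "\<dots> = (1 - ?c) * norm x"
      using c(2) by (subst norm_scaleR) simp
    also have "\<dots> = norm x - R"
      using \<open>0 < norm x\<close> by (simp add: field_simps)
    also have "\<dots> \<le> dist x z" if "z \<in> cball 0 R" for z
      using that norm_triangle_ineq2[of x z] by (simp add: dist_norm)
    finally show "\<forall>z\<in>cball 0 R. dist x (?c *\<^sub>R x) \<le> dist x z" by blast
  qed auto
  then show ?thesis using that[of ?c] c by simp
qed

locale dissipative_ode =
  fixes B :: "'a::euclidean_space \<Rightarrow> 'a \<Rightarrow> real"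
    and A :: "'a \<Rightarrow> 'b::real_normed_vector"
    and F :: "'a \<Rightarrow> 'a"
  assumes bounded_bilinear_B: "bounded_bilinear B"
    and B_commute: "B x y = B y x"
    and B_coercive: "\<exists>m>0. \<forall>x. m * (norm x)\<^sup>2 \<le> B x x"
    and bounded_linear_A: "bounded_linear A"
    and A_F: "A (F x) = 0"
    and dissipative: "A x = 0 \<Longrightarrow> B x (F x) \<le> 0"
    and lipschitz_on_cball: "\<exists>L. L-lipschitz_on (cball 0 R) F"
begin

definition solution :: "'a \<Rightarrow> (real \<Rightarrow> 'a) \<Rightarrow> bool" where
  "solution x0 x \<longleftrightarrow> x 0 = x0 \<and>
     (\<forall>t\<ge>0. A (x t) = 0 \<and> (x has_vector_derivative F (x t)) (at t within {0..}))"

lemma B_nonneg: "0 \<le> B x x"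
proof -
  obtain m where "m > 0" "m * (norm x)\<^sup>2 \<le> B x x" using B_coercive by blast
  moreover have "0 \<le> m * (norm x)\<^sup>2" using \<open>m > 0\<close> by simp
  ultimately show ?thesis by linarith
qed

lemma sublevel_bounded:
  obtains R where "0 < R" "\<And>x. B x x \<le> c \<Longrightarrow> norm x < R"
proof -
  obtain m where m: "m > 0" "\<And>x. m * (norm x)\<^sup>2 \<le> B x x" using B_coercive by blast
  show ?thesis
  proof
    have "0 \<le> sqrt (max c 0 / m)" using m(1) by simp
    then show "0 < sqrt (max c 0 / m) + 1" by linarith
    fix x assume "B x x \<le> c"
    then have "(norm x)\<^sup>2 \<le> max c 0 / m"
      using m(2)[of x] m(1) by (simp add: field_simps)
    then have "norm x \<le> sqrt (max c 0 / m)" by (rule real_le_rsqrt)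
    then show "norm x < sqrt (max c 0 / m) + 1" by simp
  qed
qed

lemma solution_energy_derivative:
  assumes "solution x0 x" "0 \<le> t"
  shows "((\<lambda>s. B (x s) (x s)) has_real_derivative 2 * B (x t) (F (x t))) (at t within {0..})"
  using assms by (intro has_real_derivative_bilinear_diag bounded_bilinear_B B_commute)
    (simp add: solution_def)

lemma solution_energy_le:
  assumes "solution x0 x" "0 \<le> t"
  shows "B (x t) (x t) \<le> B x0 x0"
  using assms bilinear_diag_le_initial_if_dissipative[OF bounded_bilinear_B B_commute, of x "\<lambda>t. F (x t)" t]
  by (auto simp: solution_def dissipative)

lemma solution_dissipation_integral:
  assumes "solution x0 x" "0 \<le> T"
  shows "integral {0..T} (\<lambda>t. - B (x t) (F (x t))) \<le> B x0 x0 / 2"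
proof -
  have "((\<lambda>t. 2 * B (x t) (F (x t))) has_integral B (x T) (x T) - B (x 0) (x 0)) {0..T}"
    using assms solution_energy_derivative[OF assms(1)]
    by (intro fundamental_theorem_of_calculus)
      (auto simp flip: has_real_derivative_iff_has_vector_derivative
        intro: has_field_derivative_subset[where t = "{0..T}" and s = "{0..}"])
  from has_integral_mult_right[OF this, of "- 1 / 2"]
  have "((\<lambda>t. - B (x t) (F (x t))) has_integral B (x 0) (x 0) / 2 - B (x T) (x T) / 2) {0..T}"
    by (simp add: algebra_simps)
  then have "integral {0..T} (\<lambda>t. - B (x t) (F (x t))) = B (x 0) (x 0) / 2 - B (x T) (x T) / 2"
    by (rule integral_unique)
  then show ?thesis using assms(1) B_nonneg[of "x T"] by (simp add: solution_def)
qed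

lemma solution_unique:
  assumes x: "solution x0 x" and y: "solution x0 y" and "0 \<le> t"
  shows "x t = y t"
proof -
  obtain R where R: "\<And>z. B z z \<le> B x0 x0 \<Longrightarrow> norm z < R" using sublevel_bounded by blast
  obtain L where L: "L-lipschitz_on (cball 0 R) F" using lipschitz_on_cball by blast
  have in_ball: "z s \<in> cball 0 R" if "solution x0 z" "s \<in> {0..t}" for z s
  proof -
    have "B (z s) (z s) \<le> B x0 x0" using solution_energy_le[OF that(1)] that(2) by simp
    then show ?thesis using R[of "z s"] by simp
  qed
  have deriv: "(z has_vector_derivative F (z s)) (at s within {0..t})"
    if "solution x0 z" "s \<in> {0..t}" for z s
  proof -
    have "(z has_vector_derivative F (z s)) (at s within {0..})"
      using that unfolding solution_def by simp
    then show ?thesis by (rule has_vector_derivative_within_subset) auto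
  qed
  show ?thesis
  proof (rule lipschitz_ode_solution_unique[OF L \<open>0 \<le> t\<close>])
    fix s assume "s \<in> {0..t}"
    then show "x s \<in> cball 0 R" "y s \<in> cball 0 R"
      and "(x has_vector_derivative F (x s)) (at s within {0..t})"
      and "(y has_vector_derivative F (y s)) (at s within {0..t})"
      using in_ball deriv x y by blast+
  next
    show "x 0 = y 0" using x y by (simp add: solution_def)
  qed
qed

text \<open>A radial cut-off of \<open>F\<close> outside the ball stays dissipative, so the energy bound keeps
  the solution of the cut-off problem inside the ball, where the cut-off is inactive.\<close>
lemma solution_exists:
  assumes "A x0 = 0"
  obtains x where "solution x0 x"
proof -
  obtain R where "0 < R" and R: "\<And>z. B z z \<le> B x0 x0 \<Longrightarrow> norm z < R"
    using sublevel_bounded by blast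
  obtain L where L: "L-lipschitz_on (cball 0 R) F" using lipschitz_on_cball by blast
  define r where "r = closest_point (cball (0::'a) R)"
  have "1-lipschitz_on UNIV r"
    unfolding r_def using closest_point_lipschitz[of "cball (0::'a) R"] \<open>0 < R\<close>
    by (intro lipschitz_onI) auto
  moreover have "r ` UNIV \<subseteq> cball 0 R"
    unfolding r_def using \<open>0 < R\<close> by (auto intro: closest_point_in_set)
  ultimately have "(L * 1)-lipschitz_on UNIV (\<lambda>z. F (r z))"
    by (intro lipschitz_on_compose2 lipschitz_on_subset[OF L])
  then obtain x where x0: "x 0 = x0"
    and x': "\<And>t. 0 \<le> t \<Longrightarrow> (x has_vector_derivative F (r (x t))) (at t within {0..})"
    using lipschitz_ode_solution_exists by blast
  have A_x: "A (x t) = 0" if "0 \<le> t" for t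
    using bounded_linear_image_const_if_derivative_in_kernel[OF bounded_linear_A x' A_F that] x0 assms
    by simp
  have "B z (F (r z)) \<le> 0" if "A z = 0" for z
  proof -
    obtain c where "0 < c" "r z = c *\<^sub>R z"
      unfolding r_def using closest_point_cball_eq_scaleR[OF \<open>0 < R\<close>] by blast
    moreover have "B (c *\<^sub>R z) (F (c *\<^sub>R z)) \<le> 0"
      using that by (intro dissipative) (simp add: linear_simps(5)[OF bounded_linear_A])
    ultimately show ?thesis
      by (simp add: bounded_bilinear.scaleR_left[OF bounded_bilinear_B] mult_le_0_iff)
  qed
  then have "B (x t) (x t) \<le> B x0 x0" if "0 \<le> t" for t
    using bilinear_diag_le_initial_if_dissipative[OF bounded_bilinear_B B_commute x' _ that] A_x x0 by simp
  then have "r (x t) = x t" if "0 \<le> t" for t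
    unfolding r_def using R that by (simp add: closest_point_self less_imp_le)
  then have "solution x0 x"
    using x0 x' A_x by (simp add: solution_def)
  then show ?thesis ..
qed

end

section \<open>The projected ODE\<close>

lemma continuous_on_projected_field:
  assumes M: "pos_diag M1" and U: "linear U"
  shows "continuous_on S (projected_field D2 M1 M2 D1t U \<nu>)"
proof -
  have "bounded_linear (Ph D2 M1)"
    using linear_Ph[OF M] by (simp add: linear_conv_bounded_linear)
  moreover have "continuous_on S (\<lambda>x. Qop M1 D1t U x x)"
    by (intro bounded_bilinear.continuous_on[OF bounded_bilinear_Qop[OF U]] continuous_on_id)
  ultimately have "continuous_on S (\<lambda>x. Ph D2 M1 (Qop M1 D1t U x x))"
    by (rule bounded_linear.continuous_on)
  moreover have "continuous_on S (\<lambda>x. \<nu> *\<^sub>R (Deltah M1 M2 D1t *v x))"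
    by (intro continuous_on_scaleR continuous_on_const linear_continuous_on
        matrix_vector_mul_bounded_linear)
  ultimately show ?thesis
    unfolding projected_field_def[abs_def] by (intro continuous_on_diff continuous_on_minus)
qed

lemma is_solution_iff:
  assumes "pos_diag M1" "linear U"
  shows "is_solution D2 M1 M2 D1t U \<nu> v0 v \<longleftrightarrow> v 0 = v0 \<and> (\<forall>t\<ge>0. v t \<in> Vh D2 M1 \<and>
    (v has_vector_derivative projected_field D2 M1 M2 D1t U \<nu> (v t)) (at t within {0..}))"
    (is "_ \<longleftrightarrow> _ \<and> (\<forall>t\<ge>0. _ \<and> (v has_vector_derivative ?F (v t)) _)")
proof -
  have "continuous_on {0..} (\<lambda>t. ?F (v t))"
    if "\<forall>t\<ge>0. (v has_vector_derivative ?F (v t)) (at t within {0..})"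
  proof (rule continuous_on_compose2[OF continuous_on_projected_field[OF assms]])
    show "continuous_on {0..} v"
      unfolding continuous_on_eq_continuous_within
      using that by (auto intro: has_vector_derivative_continuous[where D = "?F (v _)"])
  qed auto
  then show ?thesis
    unfolding is_solution_def projected_field_def by blast
qed

lemma dissipative_ode_projected_field:
  assumes "D2 ** transpose D1t = 0" and M1: "pos_diag M1" and M2: "pos_diag M2"
    and U: "linear U" and "\<nu> \<ge> 0"
  shows "dissipative_ode (inner_M M1) ((*v) (D2 ** M1)) (projected_field D2 M1 M2 D1t U \<nu>)"
proof (rule dissipative_ode.intro)
  show "bounded_bilinear (inner_M M1)" by (rule bounded_bilinear_inner_M)
  show "inner_M M1 x y = inner_M M1 y x" for x y by (rule inner_M_commute[OF M1])
  show "\<exists>m>0. \<forall>x. m * (norm x)\<^sup>2 \<le> inner_M M1 x x"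
    using inner_M_coercive[OF M1] by blast
  show "bounded_linear ((*v) (D2 ** M1))" by simp
  show "(D2 ** M1) *v projected_field D2 M1 M2 D1t U \<nu> x = 0" for x
    using projected_field_in_Vh[OF assms(1) M1] by (simp add: Vh_def)
  show "inner_M M1 x (projected_field D2 M1 M2 D1t U \<nu> x) \<le> 0" if "(D2 ** M1) *v x = 0" for x
  proof -
    have "x \<in> Vh D2 M1" using that by (simp add: Vh_def)
    then show ?thesis
      using normsq_M_nonneg[OF M2] \<open>\<nu> \<ge> 0\<close> by (simp add: inner_M_projected_field[OF M1])
  qed
  show "\<exists>L. L-lipschitz_on (cball 0 R) (projected_field D2 M1 M2 D1t U \<nu>)" for R
    using projected_field_lipschitz_on_cball[OF M1 U] by blast
qed

theorem theorem4p8: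
  fixes D1t :: "real^'e^'f" and D2 :: "real^'e^'c"
    and M1 :: "real^'e^'e" and M2 :: "real^'f^'f"
    and U :: "real^'e \<Rightarrow> real^'f^'e"
    and \<nu> :: real and v0 :: "real^'e"
  assumes "D2 ** transpose D1t = 0"
    and "pos_diag M1" and "pos_diag M2"
    and "linear U"
    and "\<nu> \<ge> 0"
    and "v0 \<in> Vh D2 M1"
  shows "\<exists>v. is_solution D2 M1 M2 D1t U \<nu> v0 v
           \<and> (\<forall>w. is_solution D2 M1 M2 D1t U \<nu> v0 w \<longrightarrow> (\<forall>t\<ge>0. w t = v t))
           \<and> (\<forall>t\<ge>0. ((\<lambda>s. Ekin M1 (v s)) has_real_derivative
                        (- \<nu> * normsq_M M2 (D1t *v v t))) (at t within {0..})
                    \<and> - \<nu> * normsq_M M2 (D1t *v v t) \<le> 0)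
           \<and> (\<forall>t\<ge>0. Ekin M1 (v t) \<le> Ekin M1 (v 0))
           \<and> (\<forall>T>0. \<nu> * integral {0..T} (\<lambda>t. normsq_M M2 (D1t *v v t)) \<le> Ekin M1 (v 0))"
proof -
  interpret dissipative_ode "inner_M M1" "(*v) (D2 ** M1)" "projected_field D2 M1 M2 D1t U \<nu>"
    using assms(1-5) by (rule dissipative_ode_projected_field)
  have solution_iff: "is_solution D2 M1 M2 D1t U \<nu> v0 w \<longleftrightarrow> solution v0 w" for w
    by (simp add: is_solution_iff assms(2,4) solution_def Vh_def)
  obtain v where v: "solution v0 v"
    using solution_exists assms(6) by (auto simp: Vh_def)
  have energy_rate: "inner_M M1 (v t) (projected_field D2 M1 M2 D1t U \<nu> (v t)) = - \<nu> * normsq_M M2 (D1t *v v t)"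
    if "0 \<le> t" for t
    using v that by (intro inner_M_projected_field assms(2)) (simp add: solution_def Vh_def)
  show ?thesis
  proof (intro exI conjI allI impI)
    show "is_solution D2 M1 M2 D1t U \<nu> v0 v" using v solution_iff by blast
    show "w t = v t" if "is_solution D2 M1 M2 D1t U \<nu> v0 w" "0 \<le> t" for w t
      using solution_unique v that solution_iff by blast
    show "((\<lambda>s. Ekin M1 (v s)) has_real_derivative - \<nu> * normsq_M M2 (D1t *v v t))
        (at t within {0..})" if "0 \<le> t" for t
      using DERIV_cmult[OF solution_energy_derivative[OF v that], of "1 / 2"] energy_rate[OF that]
      by (simp add: Ekin_def)
    show "- \<nu> * normsq_M M2 (D1t *v v t) \<le> 0" for t
      using normsq_M_nonneg[OF assms(3)] assms(5) by simp
    show "Ekin M1 (v t) \<le> Ekin M1 (v 0)" if "0 \<le> t" for t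
      using solution_energy_le[OF v that] v by (simp add: Ekin_def solution_def)
    show "\<nu> * integral {0..T} (\<lambda>t. normsq_M M2 (D1t *v v t)) \<le> Ekin M1 (v 0)" if "0 < T" for T
    proof -
      have "integral {0..T} (\<lambda>t. - inner_M M1 (v t) (projected_field D2 M1 M2 D1t U \<nu> (v t)))
          = integral {0..T} (\<lambda>t. \<nu> * normsq_M M2 (D1t *v v t))"
        by (rule integral_cong) (simp add: energy_rate)
      then show ?thesis
        using solution_dissipation_integral[OF v, of T] that v by (simp add: Ekin_def solution_def)
    qed
  qed
qed

end
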